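(* Let $t\geq 2$ be an integer, $m=4t+2$, $n=2^m+1$, and let $\delta_2=2^{4t-1}+\frac{2^{4t}-1}{5}$, $\delta_3=\delta_2-6$, and $\delta_4=\delta_2-8$, $\delta_5=\delta_2-24$ if $t=2$, $\delta_4=\delta_2-96$, $\delta_5=\delta_2-102$ if $t>2$. If $1\leq x\leq 2^{2t+2}+2^{2t+1}+3$ or $x\in\{\delta_2,\delta_3,\delta_4,\delta_5\}$, then $|C_x|=2m$.
   Context: For $n=2^m+1$ and an integer $x$, the 2-cyclotomic coset of $x$ modulo $n$ is $C_x=\{x\cdot 2^{j} \bmod n : j\geq 0\}\subseteq\{0,1,\dots,n-1\}$, and $|C_x|$ its cardinality. *)

theory Defs
  imports Main
begin

definition cyc_coset :: "nat \<Rightarrow> int \<Rightarrow> int set" where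
  "cyc_coset n x = {(x * 2 ^ j) mod int n | j::nat. True}"

end

theory Submission
  imports Defs
begin

text \<open>Let n = 2^m + 1 with m = 2u. Then |C_x| is the least k > 0 with n | x(2^k - 1);
  such k are closed under gcd and include 2m, because 2^{2m} = 1 (mod n). So if |C_x| < 2m,
  some such k is a proper divisor of 2m = 4u. Either k | m, and then n | x since
  2^m - 1 = -2 (mod n); or k = 4f with f a proper divisor of u, and then
  2^{4f} - 1 = (2^{2f} - 1)(2^{2f} + 1) shows that y = x(2^{2f} + 1) satisfies n | y(2^m - 1),
  hence n | y. Both are ruled out by size: for small x, 0 < x(2^{2f} + 1) < n; for the
  \<delta>_i one has 40\<delta>_i = 7n - s with s \<in> {15, 255, 3855, 4095}, so n | \<delta>_i(2^{2f} + 1)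
  would give n | s(2^{2f} + 1).\<close>

definition coset_period :: "int \<Rightarrow> int \<Rightarrow> nat \<Rightarrow> bool" where
  "coset_period N x k \<longleftrightarrow> N dvd x * (2 ^ k - 1)"

lemma coset_period_add:
  assumes "coset_period N x a" "coset_period N x b"
  shows "coset_period N x (a + b)"
proof -
  have "x * (2 ^ (a + b) - 1) = 2 ^ a * (x * (2 ^ b - 1)) + x * (2 ^ a - 1)"
    by (simp add: power_add algebra_simps)
  then show ?thesis using assms unfolding coset_period_def by simp
qed

lemma coset_period_mult:
  assumes "coset_period N x a"
  shows "coset_period N x (a * j)"
proof (induction j)
  case 0
  then show ?case by (simp add: coset_period_def)
next
  case (Suc j)
  then show ?case using coset_period_add[OF assms Suc.IH] by simp
qed

lemma coset_period_dvd:
  "coset_period N x a \<Longrightarrow> a dvd b \<Longrightarrow> coset_period N x b"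
  using coset_period_mult by (auto elim!: dvdE)

lemma coset_period_cancel:
  assumes "odd N" "coset_period N x a" "coset_period N x (a + b)"
  shows "coset_period N x b"
proof -
  have "2 ^ a * (x * (2 ^ b - 1)) = x * (2 ^ (a + b) - 1) - x * (2 ^ a - 1)"
    by (simp add: power_add algebra_simps)
  then have "N dvd 2 ^ a * (x * (2 ^ b - 1))"
    using assms(2,3) unfolding coset_period_def by (simp add: dvd_diff)
  moreover have "coprime N (2 ^ a)" using assms(1) by simp
  ultimately show ?thesis unfolding coset_period_def using coprime_dvd_mult_right_iff by blast
qed

lemma coset_period_gcd:
  assumes "odd N" "coset_period N x a" "coset_period N x b"
  shows "coset_period N x (gcd a b)"
proof (cases "a = 0")
  case True
  then show ?thesis using assms(3) by simp
next
  case False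
  then obtain u v where "a * u = b * v + gcd a b" using bezout_nat by blast
  then show ?thesis
    using coset_period_cancel[OF assms(1) coset_period_mult[OF assms(3)]]
      coset_period_mult[OF assms(2)] by metis
qed

lemma coset_period_of_mod_eq:
  assumes "odd N" "i < j" "x * 2 ^ i mod N = x * 2 ^ j mod N"
  shows "coset_period N x (j - i)"
proof -
  have "x * 2 ^ j - x * 2 ^ i = 2 ^ i * (x * (2 ^ (j - i) - 1))"
    using assms(2) by (simp add: algebra_simps flip: power_add)
  moreover have "N dvd x * 2 ^ j - x * 2 ^ i" using assms(3) by (metis mod_eq_dvd_iff)
  moreover have "coprime N (2 ^ i)" using assms(1) by simp
  ultimately show ?thesis unfolding coset_period_def
    using coprime_dvd_mult_right_iff by metis
qed

lemma mod_eq_of_coset_period: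
  assumes "coset_period N x K"
  shows "x * 2 ^ j mod N = x * 2 ^ (j mod K) mod N"
proof -
  have "x * 2 ^ j - x * 2 ^ (j mod K) = 2 ^ (j mod K) * (x * (2 ^ (K * (j div K)) - 1))"
    by (simp add: algebra_simps flip: power_add)
  moreover have "coset_period N x (K * (j div K))" using coset_period_mult[OF assms] .
  ultimately show ?thesis unfolding coset_period_def by (metis dvd_mult mod_eq_dvd_iff)
qed

lemma card_cyc_coset:
  assumes "odd (int n)" "0 < K" "coset_period (int n) x K"
    and "\<And>k. 0 < k \<Longrightarrow> k < K \<Longrightarrow> \<not> coset_period (int n) x k"
  shows "card (cyc_coset n x) = K"
proof -
  let ?orbit = "\<lambda>j. x * 2 ^ j mod int n"
  have "cyc_coset n x = ?orbit ` {..<K}"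
  proof (intro equalityI subsetI)
    fix z assume "z \<in> cyc_coset n x"
    then obtain j where "z = ?orbit (j mod K)"
      unfolding cyc_coset_def using mod_eq_of_coset_period[OF assms(3)] by auto
    then show "z \<in> ?orbit ` {..<K}" using assms(2) by auto
  qed (auto simp: cyc_coset_def)
  moreover have "inj_on ?orbit {..<K}"
  proof (rule linorder_inj_onI')
    fix i j assume "i \<in> {..<K}" "j \<in> {..<K}" "i < j"
    then have "0 < j - i" "j - i < K" by auto
    then show "?orbit i \<noteq> ?orbit j"
      using assms(4) coset_period_of_mod_eq[OF assms(1) \<open>i < j\<close>] by blast
  qed
  ultimately show ?thesis by (simp add: card_image)
qed

lemma coset_period_Fermat_double: "coset_period (2 ^ m + 1) x (2 * m)"
proof -
  have "(2::int) ^ (2 * m) - 1 = (2 ^ m + 1) * (2 ^ m - 1)"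
    by (simp add: power_mult algebra_simps power2_eq_square)
  then show ?thesis unfolding coset_period_def by simp
qed

lemma coset_period_Fermat_half:
  assumes "0 < m" "coset_period (2 ^ m + 1) x m"
  shows "(2 ^ m + 1) dvd x"
proof -
  have "2 * x = x * (2 ^ m + 1) - x * (2 ^ m - 1)" by (simp add: algebra_simps)
  then have "(2 ^ m + 1) dvd 2 * x" using assms(2) unfolding coset_period_def by (simp add: dvd_diff)
  moreover have "coprime (2 ^ m + 1) (2::int)" using assms(1) by simp
  ultimately show ?thesis using coprime_dvd_mult_right_iff by blast
qed

lemma dvd_quadruple_not_dvd_double:
  fixes e u :: nat
  assumes "e dvd 4 * u" "\<not> e dvd 2 * u"
  obtains f where "e = 4 * f" "f dvd u"
proof -
  obtain c where c: "4 * u = e * c" using assms(1) by (auto elim: dvdE)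
  show ?thesis
  proof (cases "even c")
    case True
    then obtain c' where "c = 2 * c'" by blast
    then have "2 * u = e * c'" using c by simp
    then show ?thesis using assms(2) by simp
  next
    case False
    then have "coprime 4 c" using coprime_power_left_iff[of 2 2 c] by simp
    then have "4 dvd e" using c by (metis coprime_dvd_mult_left_iff dvd_triv_left)
    then obtain f where "e = 4 * f" by blast
    moreover from this have "u = f * c" using c by simp
    ultimately show ?thesis using that by simp
  qed
qed

lemma card_cyc_coset_Fermat:
  fixes u :: nat and x :: int
  assumes "1 < u"
    and no_dvd: "\<And>f. f dvd u \<Longrightarrow> f < u \<Longrightarrow> \<not> (2 ^ (2 * u) + 1) dvd x * (2 ^ (2 * f) + 1)"
  shows "card (cyc_coset (2 ^ (2 * u) + 1) x) = 4 * u"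
proof -
  define m where "m = 2 * u"
  let ?N = "(2::int) ^ m + 1"
  have odd_N: "odd ?N" and "0 < m" using assms(1) by (simp_all add: m_def)
  have "\<not> ?N dvd x" using no_dvd[of 1] assms(1) unfolding m_def by (metis dvd_mult2 one_dvd)
  have no_short_period: "\<not> coset_period ?N x k" if "0 < k" "k < 2 * m" for k
  proof
    assume "coset_period ?N x k"
    define e where "e = gcd k (2 * m)"
    have e_period: "coset_period ?N x e"
      unfolding e_def by (rule coset_period_gcd[OF odd_N \<open>coset_period ?N x k\<close> coset_period_Fermat_double])
    have "e dvd 4 * u" unfolding e_def m_def by simp
    have "e \<le> k" unfolding e_def using \<open>0 < k\<close> by (rule gcd_le1_nat[OF gr_implies_not0])
    then have "e < 4 * u" using \<open>k < 2 * m\<close> unfolding m_def by simp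
    show False
    proof (cases "e dvd m")
      case True
      then show False
        using coset_period_Fermat_half[OF \<open>0 < m\<close> coset_period_dvd[OF e_period]] \<open>\<not> ?N dvd x\<close> by blast
    next
      case False
      then obtain f where f: "e = 4 * f" "f dvd u"
        using dvd_quadruple_not_dvd_double \<open>e dvd 4 * u\<close> unfolding m_def by blast
      define y where "y = x * (2 ^ (2 * f) + 1)"
      have "(2::int) ^ (4 * f) = 2 ^ (2 * f) * 2 ^ (2 * f)" by (simp flip: power_add)
      then have "x * (2 ^ e - 1) = y * (2 ^ (2 * f) - 1)"
        unfolding y_def f(1) by (simp add: algebra_simps)
      then have "coset_period ?N y (2 * f)" using e_period unfolding coset_period_def by simp
      then have "?N dvd y"
        using coset_period_Fermat_half[OF \<open>0 < m\<close> coset_period_dvd] f(2) unfolding m_def by simp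
      moreover have "f < u" using \<open>e < 4 * u\<close> f(1) by simp
      ultimately show False using no_dvd f(2) unfolding y_def m_def by blast
    qed
  qed
  have N: "int (2 ^ m + 1) = ?N" by simp
  have "card (cyc_coset (2 ^ m + 1) x) = 2 * m"
    using \<open>0 < m\<close> by (intro card_cyc_coset[of "2 ^ m + 1", unfolded N]
      odd_N coset_period_Fermat_double no_short_period) simp_all
  then show ?thesis by (simp add: m_def)
qed

lemma proper_divisor_of_odd_triple_le:
  fixes f u :: nat
  assumes "odd u" "f dvd u" "f < u"
  shows "3 * f \<le> u"
proof -
  obtain c where c: "u = f * c" using assms(2) by blast
  then have "odd c" "c \<noteq> 1" "c \<noteq> 0" using assms(1,3) by auto
  then have "3 \<le> c" by presburger
  then show ?thesis using c by simp
qed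

lemma Fermat_not_dvd_small_mult:
  fixes s :: int and a f m :: nat
  assumes "0 < s" "s < 2 ^ a" "a + 2 * f + 1 \<le> m"
  shows "\<not> (2 ^ m + 1) dvd s * (2 ^ (2 * f) + 1)"
proof -
  have "s * (2 ^ (2 * f) + 1) \<le> s * 2 ^ (2 * f + 1)" using assms(1) by simp
  also have "\<dots> < 2 ^ a * 2 ^ (2 * f + 1)" using assms(2) by simp
  also have "\<dots> = 2 ^ (a + 2 * f + 1)" by (simp add: power_add)
  also have "\<dots> \<le> 2 ^ m" using assms(3) by (intro power_increasing) simp_all
  finally show ?thesis using assms(1) zdvd_not_zless[of "s * (2 ^ (2 * f) + 1)" "2 ^ m + 1"] by simp
qed

lemma Fermat_not_dvd_range_mult:
  fixes t f :: nat and x :: int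
  assumes "2 \<le> t" "1 \<le> x" "x \<le> 2 ^ (2 * t + 2) + 2 ^ (2 * t + 1) + 3"
    and "f dvd 2 * t + 1" "f < 2 * t + 1"
  shows "\<not> (2 ^ (4 * t + 2) + 1) dvd x * (2 ^ (2 * f) + 1)"
proof (rule Fermat_not_dvd_small_mult)
  have "(2::int) ^ 5 \<le> 2 ^ (2 * t + 1)" using assms(1) by (intro power_increasing) simp_all
  then show "x < 2 ^ (2 * t + 3)" using assms(3) by (simp add: power_add)
  have "3 * f \<le> 2 * t + 1" using proper_divisor_of_odd_triple_le assms(4,5) by simp
  then show "2 * t + 3 + 2 * f + 1 \<le> 4 * t + 2" using assms(1) by presburger
qed (use assms(2) in simp)

lemma five_dvd_two_pow_four_mult_minus_one: "(5::int) dvd 2 ^ (4 * k) - 1"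
proof (induction k)
  case 0
  then show ?case by simp
next
  case (Suc k)
  have "(2::int) ^ (4 * Suc k) - 1 = 16 * (2 ^ (4 * k) - 1) + 15" by (simp add: power_add)
  also have "5 dvd \<dots>" by (rule dvd_add[OF dvd_mult[OF Suc.IH]]) simp
  finally show ?case .
qed

lemma forty_delta2_eq:
  fixes t :: nat
  assumes "1 \<le> t"
  shows "40 * ((2::int) ^ (4 * t - 1) + (2 ^ (4 * t) - 1) div 5) = 7 * (2 ^ (4 * t + 2) + 1) - 15"
proof -
  define A where "A = (2::int) ^ (4 * t)"
  have "2 * 2 ^ (4 * t - 1) = A" unfolding A_def using assms by (simp flip: power_Suc)
  moreover have "5 * ((A - 1) div 5) = A - 1"
    unfolding A_def using five_dvd_two_pow_four_mult_minus_one[of t] by simp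
  moreover have "(2::int) ^ (4 * t + 2) = 4 * A" unfolding A_def by (simp add: power_add)
  moreover have "40 * ((2::int) ^ (4 * t - 1) + (A - 1) div 5)
      = 20 * (2 * 2 ^ (4 * t - 1)) + 8 * (5 * ((A - 1) div 5))" by simp
  ultimately show ?thesis unfolding A_def[symmetric] by simp
qed

lemma dvd_mult_of_linear_relation:
  fixes N d s q c k :: int
  assumes "c * d = k * N - s" "N dvd d * q"
  shows "N dvd s * q"
proof -
  have "s * q = N * (k * q) - c * (d * q)"
    using arg_cong[of _ _ "\<lambda>z. z * q", OF assms(1)] by (simp add: algebra_simps)
  then show ?thesis using assms(2) by (simp add: dvd_diff)
qed

lemma Fermat_not_dvd_mult_near_seven_fortieths:
  fixes t f :: nat and x s :: int
  assumes "3 \<le> t" "s \<in> {15, 255, 3855, 4095}" "40 * x = 7 * (2 ^ (4 * t + 2) + 1) - s"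
    and "f dvd 2 * t + 1" "f < 2 * t + 1"
  shows "\<not> (2 ^ (4 * t + 2) + 1) dvd x * (2 ^ (2 * f) + 1)"
proof
  assume "(2 ^ (4 * t + 2) + 1) dvd x * (2 ^ (2 * f) + 1)"
  then have dvd: "(2 ^ (4 * t + 2) + 1) dvd s * (2 ^ (2 * f) + 1)"
    using dvd_mult_of_linear_relation[OF assms(3)] by blast
  have "3 * f \<le> 2 * t + 1" using proper_divisor_of_odd_triple_le assms(4,5) by simp
  moreover have "odd f" using assms(4) dvd_trans[of 2 f "2 * t + 1"] by auto
  ultimately have "t = 3 \<and> f = 1 \<or> t = 4 \<and> (f = 1 \<or> f = 3) \<or> 12 + 2 * f + 1 \<le> 4 * t + 2"
    using assms(1) by presburger
  then consider "t = 3" "f = 1" | "t = 4" "f = 1 \<or> f = 3" | "12 + 2 * f + 1 \<le> 4 * t + 2"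
    by blast
  then show False
  proof cases
    case 3
    have "0 < s" "s < 2 ^ 12" using assms(2) by auto
    then show False using dvd Fermat_not_dvd_small_mult[OF _ _ 3] by blast
  qed (use dvd assms(2) in auto)
qed

lemma Fermat_not_dvd_delta_mult:
  fixes t f :: nat and x :: int
  defines "\<delta> \<equiv> (2::int) ^ (4 * t - 1) + (2 ^ (4 * t) - 1) div 5"
  assumes "2 \<le> t"
    and "x \<in> {\<delta>, \<delta> - 6, if t = 2 then \<delta> - 8 else \<delta> - 96, if t = 2 then \<delta> - 24 else \<delta> - 102}"
    and "f dvd 2 * t + 1" "f < 2 * t + 1"
  shows "\<not> (2 ^ (4 * t + 2) + 1) dvd x * (2 ^ (2 * f) + 1)"
proof (cases "t = 2")
  case True
  then have "3 * f \<le> 5" "f \<noteq> 0" using proper_divisor_of_odd_triple_le assms(4,5) by auto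
  then have "f = 1" by linarith
  moreover have "x \<in> {179, 173, 171, 155}" using assms(3) True unfolding \<delta>_def by simp
  ultimately show ?thesis using True by auto
next
  case False
  have "40 * \<delta> = 7 * (2 ^ (4 * t + 2) + 1) - 15"
    unfolding \<delta>_def using forty_delta2_eq assms(2) by simp
  then have "40 * x \<in> (\<lambda>s. 7 * (2 ^ (4 * t + 2) + 1) - s) ` {15, 255, 3855, 4095}"
    using assms(3) False by auto
  then obtain s where "s \<in> {15, 255, 3855, 4095}" "40 * x = 7 * (2 ^ (4 * t + 2) + 1) - s"
    by blast
  then show ?thesis
    using Fermat_not_dvd_mult_near_seven_fortieths False assms(2,4,5) by simp
qed

theorem lemma4p6:
  fixes t :: nat and x :: int
  assumes "t \<ge> 2"
  defines "m \<equiv> 4 * t + 2"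
  defines "n \<equiv> 2 ^ m + 1"
  defines "\<delta>2 \<equiv> (2::int) ^ (4 * t - 1) + (2 ^ (4 * t) - 1) div 5"
  defines "\<delta>3 \<equiv> \<delta>2 - 6"
  defines "\<delta>4 \<equiv> (if t = 2 then \<delta>2 - 8 else \<delta>2 - 96)"
  defines "\<delta>5 \<equiv> (if t = 2 then \<delta>2 - 24 else \<delta>2 - 102)"
  assumes "(1 \<le> x \<and> x \<le> 2 ^ (2 * t + 2) + 2 ^ (2 * t + 1) + 3) \<or> x \<in> {\<delta>2, \<delta>3, \<delta>4, \<delta>5}"
  shows "card (cyc_coset n x) = 2 * m"
proof -
  have "\<not> (2 ^ (4 * t + 2) + 1) dvd x * (2 ^ (2 * f) + 1)"
    if "f dvd 2 * t + 1" "f < 2 * t + 1" for f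
    using assms(1,8) Fermat_not_dvd_range_mult[OF assms(1) _ _ that]
      Fermat_not_dvd_delta_mult[OF assms(1) _ that]
    unfolding \<delta>2_def \<delta>3_def \<delta>4_def \<delta>5_def by blast
  then have "card (cyc_coset (2 ^ (2 * (2 * t + 1)) + 1) x) = 4 * (2 * t + 1)"
    using assms(1) by (intro card_cyc_coset_Fermat) simp_all
  then show ?thesis unfolding n_def m_def by (simp add: algebra_simps)
qed

end
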